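(* Let $x_1,\dots,x_T\in\mathbb{R}^d$ and $r>0$. Let $A_0=I$, $A_t=A_{t-1}+\frac1rx_tx_t^\top$ for $t\ge1$, and let $D_t$ be the diagonal matrix with the same diagonal as $A_t$. Then $$\sum_{t=1}^Tx_t^\top D_t^{-1}x_t\le r\sum_{i=1}^d\ln\left(\frac1r\sum_{t=1}^Tx_{t,i}^2+1\right).$$ *)

theory Defs
  imports "HOL-Analysis.Analysis"
begin

definition outer :: "real^'d \<Rightarrow> real^'d \<Rightarrow> real^'d^'d" where
  "outer u v = (\<chi> i j. u $ i * v $ j)"

text \<open>A_0 = I, A_t = A_{t-1} + (1/r) x_t x_t^T (vectors indexed from 1; x 0 is unused).\<close>
fun Amat :: "real \<Rightarrow> (nat \<Rightarrow> real^'d) \<Rightarrow> nat \<Rightarrow> real^'d^'d" where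
  "Amat r x 0 = mat 1"
| "Amat r x (Suc t) = Amat r x t + (1 / r) *\<^sub>R outer (x (Suc t)) (x (Suc t))"

definition diag_of :: "real^'d^'d \<Rightarrow> real^'d^'d" where
  "diag_of M = (\<chi> i j. if i = j then M $ i $ i else 0)"

definition Dmat :: "real \<Rightarrow> (nat \<Rightarrow> real^'d) \<Rightarrow> nat \<Rightarrow> real^'d^'d" where
  "Dmat r x t = diag_of (Amat r x t)"

end

theory Submission
  imports Defs
begin

text \<open>Only the diagonal of A_t enters, and its i-th entry is
  a_t,i = 1 + (1/r) (x_1,i^2 + ... + x_t,i^2). So the left-hand side splits into one sum per
  coordinate, r \<Sum>_t (a_t,i - a_t-1,i) / a_t,i, and since (b - a) / b \<le> ln b - ln a for
  positive a, b, each coordinate sum telescopes to at most r ln a_T,i.\<close>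

definition diag_mat :: "('n \<Rightarrow> 'a::zero) \<Rightarrow> 'a^'n^'n" where
  "diag_mat a = (\<chi> i j. if i = j then a i else 0)"

lemma diag_of_eq_diag_mat: "diag_of M = diag_mat (\<lambda>i. M $ i $ i)"
  by (simp add: diag_of_def diag_mat_def)

lemma matrix_inv_unique:
  fixes A :: "'a::semiring_1^'n^'m" and B :: "'a^'m^'n"
  assumes "A ** B = mat 1" "B ** A = mat 1"
  shows "matrix_inv A = B"
proof -
  define C where "C = matrix_inv A"
  have "\<exists>C. A ** C = mat 1 \<and> C ** A = mat 1" using assms by blast
  then have C: "A ** C = mat 1 \<and> C ** A = mat 1"
    unfolding C_def matrix_inv_def by (rule someI_ex)
  have "C = C ** (A ** B)" using assms by simp
  also have "\<dots> = (C ** A) ** B" by (simp add: matrix_mul_assoc)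
  also have "\<dots> = B" using C by simp
  finally show ?thesis unfolding C_def .
qed

lemma diag_mat_mult_diag_mat:
  fixes a b :: "'n::finite \<Rightarrow> 'a::semiring_1"
  shows "diag_mat a ** diag_mat b = diag_mat (\<lambda>i. a i * b i)"
  by (simp add: diag_mat_def matrix_matrix_mult_def vec_eq_iff if_distrib[of "\<lambda>z. z * _"]
      cong: if_cong)

lemma diag_mat_1: "diag_mat (\<lambda>i. 1) = mat 1"
  by (simp add: diag_mat_def mat_def)

lemma matrix_inv_diag_mat:
  fixes a :: "'n::finite \<Rightarrow> 'a::field"
  assumes "\<And>i. a i \<noteq> 0"
  shows "matrix_inv (diag_mat a) = diag_mat (\<lambda>i. inverse (a i))"
  by (rule matrix_inv_unique) (simp_all add: diag_mat_mult_diag_mat assms diag_mat_1)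

lemma inner_diag_mat_mult:
  fixes a :: "'n::finite \<Rightarrow> real"
  shows "v \<bullet> (diag_mat a *v v) = (\<Sum>i\<in>UNIV. a i * (v $ i)\<^sup>2)"
  by (simp add: diag_mat_def inner_vec_def matrix_vector_mult_def if_distrib[of "\<lambda>z. _ * z"]
      power2_eq_square mult_ac cong: if_cong)

lemma Amat_nth_nth:
  "Amat r x t $ i $ i = 1 + (1/r) * (\<Sum>s=1..t. (x s $ i)\<^sup>2)"
  by (induction t) (auto simp: outer_def mat_def power2_eq_square algebra_simps)

lemma diff_divide_le_ln_diff:
  fixes a b :: real
  assumes "0 < a" "0 < b"
  shows "(b - a) / b \<le> ln b - ln a"
proof -
  have "ln (a / b) \<le> a / b - 1" using assms by (intro ln_le_minus_one) simp
  then show ?thesis using assms by (simp add: ln_divide_pos diff_divide_distrib)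
qed

lemma sum_increment_ratio_le_ln:
  fixes a :: "nat \<Rightarrow> real"
  assumes "\<And>t. 0 < a t"
  shows "(\<Sum>t=1..T. (a t - a (t - 1)) / a t) \<le> ln (a T) - ln (a 0)"
proof (induction T)
  case (Suc T)
  have "(\<Sum>t=1..Suc T. (a t - a (t - 1)) / a t)
      = (\<Sum>t=1..T. (a t - a (t - 1)) / a t) + (a (Suc T) - a T) / a (Suc T)"
    by simp
  also have "\<dots> \<le> (ln (a T) - ln (a 0)) + (ln (a (Suc T)) - ln (a T))"
    using Suc assms by (intro add_mono diff_divide_le_ln_diff) auto
  finally show ?case by simp
qed simp

theorem lemma4:
  fixes x :: "nat \<Rightarrow> real^'d" and r :: real and T :: nat
  assumes "r > 0"
  shows "(\<Sum>t=1..T. x t \<bullet> (matrix_inv (Dmat r x t) *v x t))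
           \<le> r * (\<Sum>i\<in>(UNIV::'d set). ln ((1 / r) * (\<Sum>t=1..T. (x t $ i)^2) + 1))"
proof -
  define a where "a i t = 1 + (1/r) * (\<Sum>s=1..t. (x s $ i)\<^sup>2)" for i t
  have a_pos: "0 < a i t" for i t
    using assms unfolding a_def by (simp add: add_pos_nonneg sum_nonneg)
  have increment: "(x t $ i)\<^sup>2 = r * (a i t - a i (t - 1))" if "t \<in> {1..T}" for i t
    using that assms by (cases t) (auto simp: a_def field_simps)
  have "(\<Sum>t=1..T. x t \<bullet> (matrix_inv (Dmat r x t) *v x t))
      = (\<Sum>i\<in>UNIV. \<Sum>t=1..T. (x t $ i)\<^sup>2 / a i t)"
  proof -
    have "Dmat r x t = diag_mat (\<lambda>i. a i t)" for t
      by (simp add: Dmat_def diag_of_eq_diag_mat Amat_nth_nth a_def)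
    then have "matrix_inv (Dmat r x t) = diag_mat (\<lambda>i. inverse (a i t))" for t
      using a_pos by (simp add: matrix_inv_diag_mat less_imp_neq[symmetric])
    then show ?thesis
      by (simp add: inner_diag_mat_mult divide_inverse mult.commute)
        (rule sum.swap)
  qed
  also have "\<dots> = (\<Sum>i\<in>UNIV. r * (\<Sum>t=1..T. (a i t - a i (t - 1)) / a i t))"
    by (simp add: increment sum_distrib_left)
  also have "\<dots> \<le> (\<Sum>i\<in>UNIV. r * (ln (a i T) - ln (a i 0)))"
    using assms a_pos by (intro sum_mono mult_left_mono sum_increment_ratio_le_ln) auto
  also have "\<dots> = r * (\<Sum>i\<in>(UNIV::'d set). ln ((1 / r) * (\<Sum>t=1..T. (x t $ i)^2) + 1))"
    by (simp add: a_def sum_distrib_left add.commute)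
  finally show ?thesis .
qed

end
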